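(* Let $V=(\mathbb F_2)^n$ with $n=bs$, decomposed into bricks $V=V_1\oplus\cdots\oplus V_b$, $\dim V_j=s$. Let $r\ge2$ and $\rho_1,\dots,\rho_r\in\mathrm{Sym}(V)$, and let $\Phi$ be the $r$-round Feistel network whose $i$-th round applies the Feistel operator $\bar\rho_i$. Assume that for every $1\le i\le r$, $0\rho_i=0$ and $\rho_i=\gamma_i\lambda_i$, where \begin{enumerate} \item[a)] $\gamma_i$ is a parallel map whose S-boxes are $2^\delta$-differentially uniform and strongly $(\delta-1)$-anti-invariant, for some $\delta<s$; \item[b)] $\lambda_i$ is a linear strongly proper diffusion layer. \end{enumerate} Suppose there exists a sequence of $r+1$ non-trivial linear partitions $\mathcal L(\mathcal U_1),\dots,\mathcal L(\mathcal U_{r+1})$ of $V\times V$, where each $\mathcal U_i$ is a proper non-trivial subgroup of $V\times V$ and $\mathcal L(\mathcal U_i)\bar\rho_i=\mathcal L(\mathcal U_{i+1})$ for all $1\le i\le r$. For each $i$ let $A_i=\{a\in V\mid (a,c)\in\mathcal U_i\text{ for some }c\in V\}$ and $D_i=\{d\in V\mid (0,d)\in\mathcal U_i\}$. Then none of the following conditions holds: \begin{enumerate} \item there exists $1\le i\le r-1$ such that $\mathcal L(\mathcal U_{i+1})\bar\rho_{i+1}=\mathcal L(\mathcal U_i)$; \item there exists $1\le i\le r-1$ such that $\mathcal U_i=A_i\times D_i$, $\mathcal U_{i+1}=A_{i+1}\times D_{i+1}$ and $\mathcal U_{i+2}=A_{i+2}\times D_{i+2}$; \item there exists $1\le i\le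 r$ such that $D_i=\{0\}$ and $D_{i+1}=\{0\}$; \item there exists $1\le i\le r$ such that $A_i=\{0\}$ and $A_{i+1}=\{0\}$. \end{enumerate}
   Context: Maps act on the right and are composed left to right ($\gamma\lambda$ means first $\gamma$, then $\lambda$); $+$ is bitwise XOR. The Feistel operator induced by $\rho\in\mathrm{Sym}(V)$ is $\bar\rho:V\times V\to V\times V$, $(x_1,x_2)\bar\rho=(x_2,\ x_1+x_2\rho)$. A wall is a subspace $\bigoplus_{j\in I}V_j$ with $\emptyset\ne I\subsetneq\{1,\dots,b\}$. A parallel map is $\gamma\in\mathrm{Sym}(V)$ acting brickwise, $\gamma=(\gamma^{(1)},\dots,\gamma^{(b)})$ with $\gamma^{(j)}\in\mathrm{Sym}(V_j)$ (its S-boxes, viewed as permutations of $(\mathbb F_2)^s$). A linear $\lambda\in\mathrm{GL}(V)$ is a strongly proper diffusion layer if there are no walls $W,W'$ with $W\lambda=W'$. For $f\in\mathrm{Sym}((\mathbb F_2)^s)$ and $a,c\in(\mathbb F_2)^s$ let $\delta_f(a,c)=|\{x\mid xf+(x+a)f=c\}|$; $f$ is $d$-differentially uniform if $d=\max_{a\ne0,\,c}\delta_f(a,c)$. For $1\le\epsilon<s$, $f$ with $0f=0$ is strongly $\epsilon$-anti-invariant if for all proper non-trivial subspaces $U,W$ of $(\mathbb F_2)^s$, $Uf=W$ implies $\dim U=\dim W<s-\epsilon$. For a subgroup $\mathcal U$ of $V\times V$, $\mathcal L(\mathcal U)=\{\mathcal U+v\mid v\in V\times V\}$ (non-trivial if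 neither the partition into singletons nor $\{V\times V\}$), and $\mathcal A f=\{Af\mid A\in\mathcal A\}$ for a partition $\mathcal A$. *)

theory Defs
  imports Main
begin

text \<open>Vectors of (F_2)^m are modelled as functions nat => bool with support in {0..<m};
  addition is pointwise XOR. Maps act on the right: "first gamma, then lambda" is
  the function x |-> lambda (gamma x).\<close>

type_synonym vec = "nat \<Rightarrow> bool"

definition vecs :: "nat \<Rightarrow> vec set" where
  "vecs m = {x. \<forall>k. m \<le> k \<longrightarrow> \<not> x k}"

definition vzero :: vec where "vzero = (\<lambda>_. False)"

definition vadd :: "vec \<Rightarrow> vec \<Rightarrow> vec" (infixl "\<oplus>" 65) where
  "x \<oplus> y = (\<lambda>k. x k \<noteq> y k)"

definition padd :: "vec \<times> vec \<Rightarrow> vec \<times> vec \<Rightarrow> vec \<times> vec" where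
  "padd u v = (fst u \<oplus> fst v, snd u \<oplus> snd v)"

definition subspace2 :: "nat \<Rightarrow> vec set \<Rightarrow> bool" where
  "subspace2 m U \<longleftrightarrow> U \<subseteq> vecs m \<and> vzero \<in> U \<and> (\<forall>x\<in>U. \<forall>y\<in>U. x \<oplus> y \<in> U)"

definition dim2 :: "vec set \<Rightarrow> nat" where
  "dim2 U = (THE k. card U = 2 ^ k)"

definition proper_nontrivial_subspace :: "nat \<Rightarrow> vec set \<Rightarrow> bool" where
  "proper_nontrivial_subspace m U \<longleftrightarrow> subspace2 m U \<and> U \<noteq> {vzero} \<and> U \<noteq> vecs m"

text \<open>Bricks: V = V_0 + ... + V_(b-1), brick j consisting of coordinates j*s ..< (j+1)*s.\<close>
definition block :: "nat \<Rightarrow> nat \<Rightarrow> vec \<Rightarrow> vec" where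
  "block s j x = (\<lambda>k. if k < s then x (j * s + k) else False)"

definition wall :: "nat \<Rightarrow> nat \<Rightarrow> nat set \<Rightarrow> vec set" where
  "wall b s I = {x \<in> vecs (b * s). \<forall>j<b. j \<notin> I \<longrightarrow> block s j x = vzero}"

definition is_wall :: "nat \<Rightarrow> nat \<Rightarrow> vec set \<Rightarrow> bool" where
  "is_wall b s W \<longleftrightarrow> (\<exists>I. I \<noteq> {} \<and> I \<subset> {0..<b} \<and> W = wall b s I)"

definition parallel_with :: "nat \<Rightarrow> nat \<Rightarrow> (nat \<Rightarrow> vec \<Rightarrow> vec) \<Rightarrow> (vec \<Rightarrow> vec) \<Rightarrow> bool" where
  "parallel_with b s g \<gamma> \<longleftrightarrow>
     (\<forall>j<b. bij_betw (g j) (vecs s) (vecs s)) \<and>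
     (\<forall>x\<in>vecs (b * s). \<gamma> x =
        (\<lambda>k. if k < b * s then g (k div s) (block s (k div s) x) (k mod s) else False))"

definition linear_perm :: "nat \<Rightarrow> (vec \<Rightarrow> vec) \<Rightarrow> bool" where
  "linear_perm n L \<longleftrightarrow> bij_betw L (vecs n) (vecs n) \<and>
     (\<forall>x\<in>vecs n. \<forall>y\<in>vecs n. L (x \<oplus> y) = L x \<oplus> L y)"

definition strongly_proper :: "nat \<Rightarrow> nat \<Rightarrow> (vec \<Rightarrow> vec) \<Rightarrow> bool" where
  "strongly_proper b s L \<longleftrightarrow> linear_perm (b * s) L \<and>
     \<not> (\<exists>W W'. is_wall b s W \<and> is_wall b s W' \<and> L ` W = W')"

definition ddt :: "nat \<Rightarrow> (vec \<Rightarrow> vec) \<Rightarrow> vec \<Rightarrow> vec \<Rightarrow> nat" where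
  "ddt s f a c = card {x \<in> vecs s. f x \<oplus> f (x \<oplus> a) = c}"

definition diff_uniform :: "nat \<Rightarrow> (vec \<Rightarrow> vec) \<Rightarrow> nat \<Rightarrow> bool" where
  "diff_uniform s f d \<longleftrightarrow>
     d = Max {ddt s f a c | a c. a \<in> vecs s \<and> a \<noteq> vzero \<and> c \<in> vecs s}"

definition strongly_anti_invariant :: "nat \<Rightarrow> (vec \<Rightarrow> vec) \<Rightarrow> nat \<Rightarrow> bool" where
  "strongly_anti_invariant s f \<epsilon> \<longleftrightarrow> 1 \<le> \<epsilon> \<and> \<epsilon> < s \<and> f vzero = vzero \<and>
     (\<forall>U W. proper_nontrivial_subspace s U \<and> proper_nontrivial_subspace s W \<and> f ` U = W
        \<longrightarrow> dim2 U = dim2 W \<and> dim2 W < s - \<epsilon>)"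

definition feistel :: "(vec \<Rightarrow> vec) \<Rightarrow> vec \<times> vec \<Rightarrow> vec \<times> vec" where
  "feistel \<rho> p = (snd p, fst p \<oplus> \<rho> (snd p))"

definition subgroup2 :: "nat \<Rightarrow> (vec \<times> vec) set \<Rightarrow> bool" where
  "subgroup2 n U \<longleftrightarrow> U \<subseteq> vecs n \<times> vecs n \<and> (vzero, vzero) \<in> U \<and>
     (\<forall>u\<in>U. \<forall>v\<in>U. padd u v \<in> U)"

definition proper_nontrivial_subgroup2 :: "nat \<Rightarrow> (vec \<times> vec) set \<Rightarrow> bool" where
  "proper_nontrivial_subgroup2 n U \<longleftrightarrow> subgroup2 n U \<and> U \<noteq> {(vzero, vzero)} \<and>
     U \<noteq> vecs n \<times> vecs n"

definition linpart :: "nat \<Rightarrow> (vec \<times> vec) set \<Rightarrow> (vec \<times> vec) set set" where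
  "linpart n U = {(\<lambda>u. padd u v) ` U | v. v \<in> vecs n \<times> vecs n}"

definition nontrivial_partition :: "nat \<Rightarrow> (vec \<times> vec) set set \<Rightarrow> bool" where
  "nontrivial_partition n P \<longleftrightarrow> P \<noteq> {{p} | p. p \<in> vecs n \<times> vecs n} \<and> P \<noteq> {vecs n \<times> vecs n}"

definition part_image :: "('a set) set \<Rightarrow> ('a \<Rightarrow> 'a) \<Rightarrow> ('a set) set" where
  "part_image P f = {f ` A | A. A \<in> P}"

definition Aset :: "nat \<Rightarrow> (vec \<times> vec) set \<Rightarrow> vec set" where
  "Aset n U = {a \<in> vecs n. \<exists>c\<in>vecs n. (a, c) \<in> U}"

definition Dset :: "nat \<Rightarrow> (vec \<times> vec) set \<Rightarrow> vec set" where
  "Dset n U = {d \<in> vecs n. (vzero, d) \<in> U}"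

end

(* Write D and B for the sets of d with (0, d) in U and of b with (b, 0) in U. If the Feistel
   operator of rho maps the cosets of U onto those of U', then in any direction c occurring as a
   second coordinate in U the derivative of rho takes values in the coset rho c + B. Condition 4
   fails directly. Condition 3 makes B trivial, so some derivative is constant. Conditions 1 and 2
   give subspaces D, B such that the derivatives of rho_i in directions from D lie in B and those
   of rho_(i+1) in directions from B lie in D.

   The S-boxes force every subspace X closed under derivatives in this way to contain each brick
   on which some element of X is nonzero: on a brick, a derivative in a nonzero direction with
   values in a subspace Z takes each value at most 2^delta times, so dim Z > s - delta, which
   strong (delta - 1)-anti-invariance allows only for the whole brick. A constant derivative in
   direction c would thus put a whole brick into {0, c}. And D, B are trivial, all of V, or walls;
   walls are impossible since the linear layer would map the wall D onto the wall B, and the other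
   two cases contradict U being a proper non-trivial subgroup. *)

theory Submission
  imports Defs "HOL-Algebra.Coset" "HOL-Computational_Algebra.Primes"
begin

section \<open>Vectors over F_2\<close>

lemma vadd_comm: "x \<oplus> y = y \<oplus> x"
  by (auto simp: vadd_def fun_eq_iff)

lemma vadd_assoc: "(x \<oplus> y) \<oplus> z = x \<oplus> (y \<oplus> z)"
  by (auto simp: vadd_def fun_eq_iff)

lemma vadd_self [simp]: "x \<oplus> x = vzero"
  by (auto simp: vadd_def vzero_def fun_eq_iff)

lemma vadd_vzero [simp]: "x \<oplus> vzero = x"
  by (auto simp: vadd_def vzero_def fun_eq_iff)

lemma vzero_vadd [simp]: "vzero \<oplus> x = x"
  by (auto simp: vadd_def vzero_def fun_eq_iff)

lemma vadd_cancel_left [simp]: "x \<oplus> (x \<oplus> y) = y"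
  by (auto simp: vadd_def fun_eq_iff)

lemma vadd_cancel_right [simp]: "(y \<oplus> x) \<oplus> x = y"
  by (auto simp: vadd_def fun_eq_iff)

lemma vadd_eq_vzero_iff: "x \<oplus> y = vzero \<longleftrightarrow> x = y"
  by (auto simp: vadd_def vzero_def fun_eq_iff)

lemma vzero_in_vecs [simp]: "vzero \<in> vecs m"
  by (simp add: vecs_def vzero_def)

lemma vadd_in_vecs [intro]: "x \<in> vecs m \<Longrightarrow> y \<in> vecs m \<Longrightarrow> x \<oplus> y \<in> vecs m"
  by (auto simp: vecs_def vadd_def)

lemma bij_betw_vecs_Pow: "bij_betw (\<lambda>x. {k. x k}) (vecs m) (Pow {0..<m})"
proof (rule bij_betwI')
  show "{k. x k} \<in> Pow {0..<m}" if "x \<in> vecs m" for x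
    using that by (auto simp: vecs_def) (meson not_le)
  show "\<exists>x\<in>vecs m. S = {k. x k}" if "S \<in> Pow {0..<m}" for S
    using that by (intro bexI[of _ "\<lambda>k. k \<in> S"]) (auto simp: vecs_def)
qed (auto simp: fun_eq_iff)

lemma finite_vecs [simp]: "finite (vecs m)"
  using bij_betw_finite[OF bij_betw_vecs_Pow] by simp

lemma card_vecs: "card (vecs m) = 2 ^ m"
  using bij_betw_same_card[OF bij_betw_vecs_Pow, of m] by (simp add: card_Pow)

lemma subspace2_finite: "subspace2 m W \<Longrightarrow> finite W"
  unfolding subspace2_def using finite_subset finite_vecs by blast

definition xor_group :: "nat \<Rightarrow> vec monoid" where
  "xor_group m = \<lparr>carrier = vecs m, monoid.mult = (\<oplus>), one = vzero\<rparr>"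

lemma group_xor_group: "group (xor_group m)"
  unfolding xor_group_def
proof (rule groupI, simp_all)
  show "\<exists>y\<in>vecs m. y \<oplus> x = vzero" if "x \<in> vecs m" for x
    using that by (intro bexI[of _ x]) simp_all
qed (simp_all add: vadd_assoc vadd_in_vecs)

lemma subgroup_xor_group:
  assumes "subspace2 m W"
  shows "subgroup W (xor_group m)"
proof -
  interpret group "xor_group m" by (rule group_xor_group)
  have inv_self: "inv\<^bsub>xor_group m\<^esub> x = x" if "x \<in> vecs m" for x
    using that by (intro inv_equality) (auto simp: xor_group_def)
  have W: "W \<subseteq> vecs m" "vzero \<in> W" "\<forall>x\<in>W. \<forall>y\<in>W. x \<oplus> y \<in> W"
    using assms by (simp_all add: subspace2_def)
  show ?thesis
  proof (rule subgroupI)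
    show "inv\<^bsub>xor_group m\<^esub> x \<in> W" if "x \<in> W" for x
      using that W(1) inv_self by auto
  qed (use W in \<open>auto simp: xor_group_def\<close>)
qed

lemma subspace2_card_power_of_two:
  assumes "subspace2 m W"
  obtains k where "card W = 2 ^ k"
proof -
  have "card (rcosets\<^bsub>xor_group m\<^esub> W) * card W = 2 ^ m"
    using group.lagrange[OF group_xor_group subgroup_xor_group[OF assms]]
    by (simp add: order_def xor_group_def card_vecs)
  then have "card W dvd 2 ^ m"
    by (metis dvd_triv_right)
  then show ?thesis
    using that by (auto simp: divides_primepow_nat)
qed

lemma dim2_eq: "card W = 2 ^ k \<Longrightarrow> dim2 W = k"
  unfolding dim2_def by (rule the_equality) auto

section \<open>Bricks and parallel maps\<close>

definition brick_embed :: "nat \<Rightarrow> nat \<Rightarrow> vec \<Rightarrow> vec" where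
  "brick_embed s j y = (\<lambda>k. if j * s \<le> k \<and> k < j * s + s then y (k - j * s) else False)"

lemma block_brick_embed:
  assumes "y \<in> vecs s"
  shows "block s i (brick_embed s j y) = (if i = j then y else vzero)"
proof (cases "i = j")
  case True
  then show ?thesis
    using assms by (auto simp: block_def brick_embed_def vecs_def fun_eq_iff)
next
  case False
  have "i * s + s \<le> j * s \<or> j * s + s \<le> i * s"
    using False mult_le_mono1[of "Suc i" j s] mult_le_mono1[of "Suc j" i s] by (cases "i < j") auto
  then show ?thesis
    using False by (auto simp: block_def brick_embed_def vzero_def fun_eq_iff)
qed

lemma brick_embed_in_vecs: "j < b \<Longrightarrow> brick_embed s j y \<in> vecs (b * s)"
  using mult_le_mono1[of "Suc j" b s] by (auto simp: vecs_def brick_embed_def)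

lemma brick_embed_vadd: "brick_embed s j (y \<oplus> z) = brick_embed s j y \<oplus> brick_embed s j z"
  by (auto simp: brick_embed_def vadd_def fun_eq_iff)

lemma brick_embed_vzero [simp]: "brick_embed s j vzero = vzero"
  by (auto simp: brick_embed_def vzero_def fun_eq_iff)

lemma inj_on_brick_embed: "inj_on (brick_embed s j) (vecs s)"
  by (rule inj_onI) (metis block_brick_embed)

lemma block_vadd: "block s j (x \<oplus> y) = block s j x \<oplus> block s j y"
  by (auto simp: block_def vadd_def fun_eq_iff)

lemma block_vzero [simp]: "block s j vzero = vzero"
  by (auto simp: block_def vzero_def fun_eq_iff)

lemma block_in_vecs [simp]: "block s j x \<in> vecs s"
  by (auto simp: block_def vecs_def)

lemma vecs_eq_by_blocks:
  assumes "x \<in> vecs (b * s)" "y \<in> vecs (b * s)" "0 < s" "\<And>j. j < b \<Longrightarrow> block s j x = block s j y"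
  shows "x = y"
proof
  fix k
  show "x k = y k"
  proof (cases "k < b * s")
    case True
    then have "k div s < b" "k mod s < s" "k div s * s + k mod s = k"
      using assms(3) by (simp_all add: less_mult_imp_div_less)
    then show ?thesis
      using assms(4)[of "k div s"] unfolding block_def fun_eq_iff by metis
  next
    case False
    then show ?thesis using assms(1,2) by (simp add: vecs_def)
  qed
qed

lemma exists_nonzero_block:
  assumes "x \<in> vecs (b * s)" "x \<noteq> vzero" "0 < s"
  obtains j where "j < b" "block s j x \<noteq> vzero"
  using vecs_eq_by_blocks[OF assms(1) vzero_in_vecs assms(3)] assms(2) by auto

lemma block_parallel:
  assumes "parallel_with b s g \<gamma>" "x \<in> vecs (b * s)" "j < b"
  shows "block s j (\<gamma> x) = g j (block s j x)"
proof
  fix k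
  have "g j (block s j x) \<in> vecs s"
    using assms(1,3) block_in_vecs unfolding parallel_with_def bij_betw_def by blast
  moreover have "j * s + k < b * s" if "k < s"
    using that assms(3) mult_le_mono1[of "Suc j" b s] by simp
  ultimately show "block s j (\<gamma> x) k = g j (block s j x) k"
    using assms(1,2) by (auto simp: parallel_with_def block_def vecs_def)
qed

lemma parallel_in_vecs: "parallel_with b s g \<gamma> \<Longrightarrow> x \<in> vecs (b * s) \<Longrightarrow> \<gamma> x \<in> vecs (b * s)"
  by (simp add: parallel_with_def vecs_def)

lemma parallel_inj_on:
  assumes "parallel_with b s g \<gamma>" "0 < s"
  shows "inj_on \<gamma> (vecs (b * s))"
proof (rule inj_onI)
  fix x y assume xy: "x \<in> vecs (b * s)" "y \<in> vecs (b * s)" "\<gamma> x = \<gamma> y"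
  have "block s j x = block s j y" if "j < b" for j
    using block_parallel[OF assms(1) _ that] xy assms(1) that
    by (metis block_in_vecs bij_betw_def inj_onD parallel_with_def)
  then show "x = y"
    using vecs_eq_by_blocks[OF xy(1,2) assms(2)] by blast
qed

lemma parallel_brick_embed:
  assumes "parallel_with b s g \<gamma>" "0 < s" "\<forall>i<b. g i vzero = vzero"
    and "j < b" "y \<in> vecs s"
  shows "\<gamma> (brick_embed s j y) = brick_embed s j (g j y)"
proof -
  have "g j y \<in> vecs s"
    using assms(1,4,5) by (auto simp: parallel_with_def bij_betw_def)
  then show ?thesis
    using assms block_parallel[OF assms(1) brick_embed_in_vecs]
    by (intro vecs_eq_by_blocks[OF parallel_in_vecs[OF assms(1) brick_embed_in_vecs]
          brick_embed_in_vecs assms(2)]) (simp_all add: block_brick_embed)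
qed

lemma parallel_image_wall:
  assumes "parallel_with b s g \<gamma>" "0 < s" "\<forall>j<b. g j vzero = vzero"
  shows "\<gamma> ` wall b s I = wall b s I"
proof -
  have wall_vecs: "wall b s I \<subseteq> vecs (b * s)"
    by (auto simp: wall_def)
  have "\<gamma> ` wall b s I \<subseteq> wall b s I"
    using assms block_parallel[OF assms(1)] parallel_in_vecs[OF assms(1)]
    by (auto simp: wall_def)
  moreover have "card (\<gamma> ` wall b s I) = card (wall b s I)"
    using card_image inj_on_subset[OF parallel_inj_on[OF assms(1,2)] wall_vecs] by blast
  ultimately show ?thesis
    using finite_subset[OF wall_vecs finite_vecs] by (simp add: card_subset_eq)
qed

section \<open>S-boxes\<close>

lemma ddt_le_diff_uniform:
  assumes "diff_uniform s g d" "a \<in> vecs s" "a \<noteq> vzero" "c \<in> vecs s"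
  shows "ddt s g a c \<le> d"
proof -
  let ?T = "{ddt s g a c |a c. a \<in> vecs s \<and> a \<noteq> vzero \<and> c \<in> vecs s}"
  have "finite {ddt s g a c |a c. a \<in> vecs s \<and> c \<in> vecs s}"
    using finite_image_set2[of "\<lambda>a. a \<in> vecs s" "\<lambda>c. c \<in> vecs s" "ddt s g"] by simp
  then have "finite ?T"
    by (rule rev_finite_subset) blast
  moreover have "ddt s g a c \<in> ?T"
    using assms(2-4) by blast
  ultimately have "ddt s g a c \<le> Max ?T"
    by (rule Max_ge)
  then show ?thesis
    using assms(1) unfolding diff_uniform_def by simp
qed

lemma derivative_not_constant:
  assumes "bij_betw g (vecs s) (vecs s)" "diff_uniform s g (2 ^ \<delta>)" "\<delta> < s"
    and "a \<in> vecs s" "a \<noteq> vzero"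
  shows "\<exists>y\<in>vecs s. g y \<oplus> g (y \<oplus> a) \<noteq> c"
proof (rule ccontr)
  assume "\<not> ?thesis"
  then have const: "\<forall>y\<in>vecs s. g y \<oplus> g (y \<oplus> a) = c"
    by blast
  have "g vzero \<in> vecs s" "g a \<in> vecs s"
    using bij_betwE[OF assms(1)] assms(4) by auto
  moreover have "g vzero \<oplus> g a = c"
    using bspec[OF const vzero_in_vecs] by simp
  ultimately have "c \<in> vecs s"
    by (metis vadd_in_vecs)
  then have "ddt s g a c \<le> 2 ^ \<delta>"
    by (rule ddt_le_diff_uniform[OF assms(2,4,5)])
  moreover have "{y \<in> vecs s. g y \<oplus> g (y \<oplus> a) = c} = vecs s"
    using const by auto
  then have "ddt s g a c = 2 ^ s"
    by (simp add: ddt_def card_vecs)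
  ultimately show False
    using assms(3) by simp
qed

lemma card_derivative_range:
  assumes "diff_uniform s g (2 ^ \<delta>)" "a \<in> vecs s" "a \<noteq> vzero" "S \<subseteq> vecs s"
    and "\<forall>y\<in>vecs s. g y \<oplus> g (y \<oplus> a) \<in> S"
  shows "2 ^ s \<le> card S * 2 ^ \<delta>"
proof -
  have fin: "finite S"
    using assms(4) finite_vecs by (rule finite_subset)
  have "vecs s \<subseteq> (\<Union>c\<in>S. {x \<in> vecs s. g x \<oplus> g (x \<oplus> a) = c})"
    using assms(5) by auto
  then have "card (vecs s) \<le> card (\<Union>c\<in>S. {x \<in> vecs s. g x \<oplus> g (x \<oplus> a) = c})"
    by (rule card_mono[rotated]) (simp add: fin)
  also have "\<dots> \<le> (\<Sum>c\<in>S. ddt s g a c)"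
    unfolding ddt_def by (rule card_UN_le[OF fin])
  also have "\<dots> \<le> card S * 2 ^ \<delta>"
  proof -
    have "ddt s g a c \<le> 2 ^ \<delta>" if "c \<in> S" for c
      using that assms(4) by (intro ddt_le_diff_uniform[OF assms(1-3)]) blast
    then show ?thesis
      using sum_bounded_above[of S "ddt s g a" "2 ^ \<delta>"] by simp
  qed
  finally show ?thesis
    by (simp add: card_vecs)
qed

text \<open>A derivative of a permutation in a nonzero direction never vanishes, so it takes at most
  |Z| - 1 values, each at most 2^\<delta> times.\<close>
lemma derivative_subspace_dim_bound:
  assumes "bij_betw g (vecs s) (vecs s)" "diff_uniform s g (2 ^ \<delta>)"
    and "a \<in> vecs s" "a \<noteq> vzero" "subspace2 s Z"
    and "\<forall>y\<in>vecs s. g y \<oplus> g (y \<oplus> a) \<in> Z"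
  shows "s < dim2 Z + \<delta>"
proof -
  obtain k where k: "card Z = 2 ^ k"
    using subspace2_card_power_of_two[OF assms(5)] .
  have "g y \<oplus> g (y \<oplus> a) \<noteq> vzero" if "y \<in> vecs s" for y
  proof
    assume "g y \<oplus> g (y \<oplus> a) = vzero"
    then have "g y = g (y \<oplus> a)"
      by (simp add: vadd_eq_vzero_iff)
    moreover have "inj_on g (vecs s)" "y \<oplus> a \<in> vecs s"
      using assms(1,3) that by (auto simp: bij_betw_def)
    ultimately have "y \<oplus> y = y \<oplus> (y \<oplus> a)"
      using that by (metis inj_onD)
    then show False
      using assms(4) by simp
  qed
  then have "2 ^ s \<le> card (Z - {vzero}) * 2 ^ \<delta>"
    using assms(5,6) by (intro card_derivative_range[OF assms(2-4)]) (auto simp: subspace2_def)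
  also have "\<dots> = (2 ^ k - 1) * 2 ^ \<delta>"
    using k assms(5) subspace2_finite by (simp add: subspace2_def card_Diff_singleton)
  also have "\<dots> < 2 ^ (k + \<delta>)"
    by (simp add: power_add)
  finally show ?thesis
    using dim2_eq[OF k] by simp
qed

lemma sbox_invariant_subspace_eq_vecs:
  assumes "bij_betw g (vecs s) (vecs s)" "diff_uniform s g (2 ^ \<delta>)"
    and "strongly_anti_invariant s g (\<delta> - 1)" "\<delta> < s"
    and X: "subspace2 s X" and Z: "subspace2 s Z" and XZ: "g ` X = Z"
    and "a \<in> vecs s" "a \<noteq> vzero" "\<forall>y\<in>vecs s. g (a \<oplus> y) \<oplus> g y \<oplus> g a \<in> Z"
    and deriv_X: "\<forall>x\<in>X. \<forall>y\<in>vecs s. g (x \<oplus> y) \<oplus> g y \<oplus> g x \<in> Z"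
  shows "X = vecs s"
proof (rule ccontr)
  assume X_proper: "X \<noteq> vecs s"
  have g0: "g vzero = vzero" and \<delta>: "2 \<le> \<delta>"
    using assms(3) by (auto simp: strongly_anti_invariant_def)
  have inj: "inj_on g (vecs s)"
    using assms(1) by (simp add: bij_betw_def)
  have X_vecs: "X \<subseteq> vecs s" and Z_closed: "\<forall>x\<in>Z. \<forall>y\<in>Z. x \<oplus> y \<in> Z"
    using X Z by (simp_all add: subspace2_def)
  have "Z \<noteq> {vzero}"
  proof
    assume "Z = {vzero}"
    then have "g y \<oplus> g (y \<oplus> a) = g a" if "y \<in> vecs s" for y
      using assms(10) that by (auto simp: vadd_comm vadd_eq_vzero_iff)
    then show False
      using derivative_not_constant[OF assms(1,2,4,8,9)] by blast
  qed
  then obtain z where "z \<in> Z" "z \<noteq> vzero"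
    using Z by (auto simp: subspace2_def)
  then obtain x where x: "x \<in> X" "x \<noteq> vzero"
    using XZ g0 by blast
  have "g y \<oplus> g (y \<oplus> x) \<in> Z" if "y \<in> vecs s" for y
  proof -
    have "(g (x \<oplus> y) \<oplus> g y \<oplus> g x) \<oplus> g x \<in> Z"
      using Z_closed deriv_X x(1) that XZ by blast
    then show ?thesis
      by (simp add: vadd_comm vadd_assoc)
  qed
  then have lower: "s < dim2 Z + \<delta>"
    using x X_vecs by (intro derivative_subspace_dim_bound[OF assms(1,2) _ x(2) Z]) auto
  have "Z \<noteq> vecs s"
    using X_proper XZ inj X_vecs assms(1) by (metis bij_betw_def inj_on_image_eq_iff order_refl)
  moreover have "X \<noteq> {vzero}" "Z \<noteq> {vzero}"
    using x \<open>Z \<noteq> {vzero}\<close> by auto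
  ultimately have "dim2 Z < s - (\<delta> - 1)"
    using assms(3) X Z XZ X_proper by (auto simp: strongly_anti_invariant_def proper_nontrivial_subspace_def)
  then show False
    using lower \<delta> by linarith
qed

section \<open>Subspaces closed under derivatives\<close>

definition derivatives_in :: "nat \<Rightarrow> (vec \<Rightarrow> vec) \<Rightarrow> vec set \<Rightarrow> vec set \<Rightarrow> bool" where
  "derivatives_in n f X Y \<longleftrightarrow> (\<forall>x\<in>X. \<forall>v\<in>vecs n. f (x \<oplus> v) \<oplus> f v \<in> Y)"

lemma subspace2_brick_slice:
  assumes "subspace2 (b * s) X"
  shows "subspace2 s {y \<in> vecs s. brick_embed s j y \<in> X}"
  using assms by (auto simp: subspace2_def brick_embed_vadd)

lemma parallel_derivative_brick_embed:
  assumes par: "parallel_with b s g \<gamma>" and "0 < s" "\<forall>i<b. g i vzero = vzero"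
    and "j < b" "u \<in> vecs (b * s)" "y \<in> vecs s"
  shows "\<gamma> (u \<oplus> brick_embed s j y) \<oplus> \<gamma> (brick_embed s j y) \<oplus> \<gamma> u
    = brick_embed s j (g j (block s j u \<oplus> y) \<oplus> g j y \<oplus> g j (block s j u))"
proof -
  have e: "brick_embed s j y \<in> vecs (b * s)"
    using assms(4) by (rule brick_embed_in_vecs)
  have "g j (block s j u \<oplus> y) \<oplus> g j y \<oplus> g j (block s j u) \<in> vecs s"
    using par assms(4,6) unfolding parallel_with_def bij_betw_def
    by (metis block_in_vecs image_eqI vadd_in_vecs)
  then show ?thesis
    using assms e block_parallel[OF par]
    by (intro vecs_eq_by_blocks[OF _ brick_embed_in_vecs assms(2)])
       (auto simp: block_vadd block_brick_embed parallel_in_vecs[OF par] vadd_in_vecs)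
qed

lemma parallel_image_brick_slice:
  assumes par: "parallel_with b s g \<gamma>" and "0 < s" "\<forall>i<b. g i vzero = vzero" "j < b"
    and X_vecs: "X \<subseteq> vecs (b * s)" and XZ: "\<gamma> ` X = Z"
  shows "g j ` {y \<in> vecs s. brick_embed s j y \<in> X} = {z \<in> vecs s. brick_embed s j z \<in> Z}"
proof
  have gj: "bij_betw (g j) (vecs s) (vecs s)"
    using par assms(4) by (simp add: parallel_with_def)
  have \<gamma>_embed: "\<gamma> (brick_embed s j y) = brick_embed s j (g j y)" if "y \<in> vecs s" for y
    using parallel_brick_embed[OF par assms(2,3,4) that] .
  show "g j ` {y \<in> vecs s. brick_embed s j y \<in> X} \<subseteq> {z \<in> vecs s. brick_embed s j z \<in> Z}"
  proof
    fix z assume "z \<in> g j ` {y \<in> vecs s. brick_embed s j y \<in> X}"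
    then obtain y where y: "y \<in> vecs s" "brick_embed s j y \<in> X" "z = g j y"
      by blast
    then have "brick_embed s j z = \<gamma> (brick_embed s j y)" "z \<in> vecs s"
      using \<gamma>_embed bij_betwE[OF gj] by auto
    then show "z \<in> {z \<in> vecs s. brick_embed s j z \<in> Z}"
      using XZ y(2) by auto
  qed
  show "{z \<in> vecs s. brick_embed s j z \<in> Z} \<subseteq> g j ` {y \<in> vecs s. brick_embed s j y \<in> X}"
  proof
    fix z assume z: "z \<in> {z \<in> vecs s. brick_embed s j z \<in> Z}"
    then obtain y where y: "y \<in> vecs s" "g j y = z"
      using bij_betw_imp_surj_on[OF gj] by force
    have "\<gamma> (brick_embed s j y) \<in> \<gamma> ` X"
      using z y \<gamma>_embed XZ by simp
    then have "brick_embed s j y \<in> X"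
      using inj_onD[OF parallel_inj_on[OF par assms(2)]] X_vecs brick_embed_in_vecs[OF assms(4)]
      by blast
    then show "z \<in> g j ` {y \<in> vecs s. brick_embed s j y \<in> X}"
      using y by auto
  qed
qed

lemma parallel_derivative_brick_slice:
  assumes par: "parallel_with b s g \<gamma>" and "0 < s" "\<forall>i<b. g i vzero = vzero" "j < b"
    and X_vecs: "X \<subseteq> vecs (b * s)" and Z: "subspace2 (b * s) Z" and XZ: "\<gamma> ` X = Z"
    and der: "derivatives_in (b * s) \<gamma> X Z" and "u \<in> X" "y \<in> vecs s"
  shows "g j (block s j u \<oplus> y) \<oplus> g j y \<oplus> g j (block s j u) \<in> {z \<in> vecs s. brick_embed s j z \<in> Z}"
proof -
  have "\<gamma> (u \<oplus> brick_embed s j y) \<oplus> \<gamma> (brick_embed s j y) \<in> Z"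
    using der assms(9) brick_embed_in_vecs[OF assms(4)] by (simp add: derivatives_in_def)
  moreover have "\<gamma> u \<in> Z"
    using XZ assms(9) by blast
  ultimately have "\<gamma> (u \<oplus> brick_embed s j y) \<oplus> \<gamma> (brick_embed s j y) \<oplus> \<gamma> u \<in> Z"
    using Z by (simp add: subspace2_def)
  moreover have "g j v \<in> vecs s" if "v \<in> vecs s" for v
    using par assms(4) that by (auto simp: parallel_with_def bij_betw_def)
  ultimately show ?thesis
    using assms(9,10) X_vecs
    by (auto simp: parallel_derivative_brick_embed[OF par assms(2,3,4)] vadd_in_vecs)
qed

lemma parallel_brick_closed:
  assumes "0 < s" "\<delta> < s" and par: "parallel_with b s g \<gamma>"
    and sbox: "\<forall>j<b. diff_uniform s (g j) (2 ^ \<delta>) \<and> strongly_anti_invariant s (g j) (\<delta> - 1)"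
    and X: "subspace2 (b * s) X" and Z: "subspace2 (b * s) Z" and XZ: "\<gamma> ` X = Z"
    and der: "derivatives_in (b * s) \<gamma> X Z"
    and "x \<in> X" "j < b" "block s j x \<noteq> vzero" "y \<in> vecs s"
  shows "brick_embed s j y \<in> X"
proof -
  let ?Xj = "{y \<in> vecs s. brick_embed s j y \<in> X}"
  have g0: "\<forall>i<b. g i vzero = vzero"
    using sbox by (simp add: strongly_anti_invariant_def)
  have X_vecs: "X \<subseteq> vecs (b * s)"
    using X by (simp add: subspace2_def)
  let ?Zj = "{z \<in> vecs s. brick_embed s j z \<in> Z}"
  have gj: "bij_betw (g j) (vecs s) (vecs s)"
    using par assms(10) by (simp add: parallel_with_def)
  have sbox_j: "diff_uniform s (g j) (2 ^ \<delta>)" "strongly_anti_invariant s (g j) (\<delta> - 1)"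
    using sbox assms(10) by simp_all
  have slices: "subspace2 s ?Xj" "subspace2 s ?Zj"
    using X Z by (simp_all add: subspace2_brick_slice)
  note deriv = parallel_derivative_brick_slice[OF par assms(1) g0 assms(10) X_vecs Z XZ der]
  have "\<forall>x'\<in>?Xj. \<forall>y\<in>vecs s. g j (x' \<oplus> y) \<oplus> g j y \<oplus> g j x' \<in> ?Zj"
  proof (intro ballI)
    fix x' y assume "x' \<in> ?Xj" "y \<in> vecs s"
    then show "g j (x' \<oplus> y) \<oplus> g j y \<oplus> g j x' \<in> ?Zj"
      using deriv[of "brick_embed s j x'" y] by (simp add: block_brick_embed)
  qed
  then have "?Xj = vecs s"
    using deriv[OF assms(9)]
    by (intro sbox_invariant_subspace_eq_vecs[OF gj sbox_j assms(2) slices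
        parallel_image_brick_slice[OF par assms(1) g0 assms(10) X_vecs XZ] block_in_vecs assms(11)])
      simp_all
  then show ?thesis
    using assms(12) by auto
qed

definition spn_round :: "nat \<Rightarrow> nat \<Rightarrow> (vec \<Rightarrow> vec) \<Rightarrow> bool" where
  "spn_round b s \<rho> \<longleftrightarrow> bij_betw \<rho> (vecs (b * s)) (vecs (b * s)) \<and> \<rho> vzero = vzero \<and>
     (\<exists>\<gamma> L \<delta> g. \<delta> < s \<and> parallel_with b s g \<gamma> \<and>
        (\<forall>j<b. diff_uniform s (g j) (2 ^ \<delta>) \<and> strongly_anti_invariant s (g j) (\<delta> - 1)) \<and>
        strongly_proper b s L \<and> (\<forall>x\<in>vecs (b * s). \<rho> x = L (\<gamma> x)))"

lemma derivatives_in_linear_comp: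
  assumes L: "linear_perm n L" and \<rho>: "\<forall>x\<in>vecs n. \<rho> x = L (\<gamma> x)"
    and "\<gamma> ` vecs n \<subseteq> vecs n"
    and X_vecs: "X \<subseteq> vecs n" and Y: "subspace2 n Y" and XY: "\<rho> ` X = Y"
    and der: "derivatives_in n \<rho> X Y"
  obtains Z where "subspace2 n Z" "\<gamma> ` X = Z" "derivatives_in n \<gamma> X Z"
proof
  let ?Z = "{z \<in> vecs n. L z \<in> Y}"
  have \<gamma>_vecs: "\<gamma> v \<in> vecs n" if "v \<in> vecs n" for v
    using assms(3) that by blast
  have L_inj: "inj_on L (vecs n)"
    and L_add: "\<And>u v. u \<in> vecs n \<Longrightarrow> v \<in> vecs n \<Longrightarrow> L (u \<oplus> v) = L u \<oplus> L v"
    using L by (auto simp: linear_perm_def bij_betw_def)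
  have "L vzero = vzero"
    using L_add[OF vzero_in_vecs vzero_in_vecs] by simp
  then show "subspace2 n ?Z"
    using Y L_add by (auto simp: subspace2_def vadd_in_vecs)
  show "\<gamma> ` X = ?Z"
  proof
    show "\<gamma> ` X \<subseteq> ?Z"
    proof
      fix z assume "z \<in> \<gamma> ` X"
      then obtain u where u: "u \<in> X" "z = \<gamma> u"
        by blast
      then have "L z = \<rho> u" "z \<in> vecs n"
        using X_vecs \<rho> \<gamma>_vecs by auto
      then show "z \<in> ?Z"
        using XY u(1) by auto
    qed
    show "?Z \<subseteq> \<gamma> ` X"
    proof
      fix z assume z: "z \<in> ?Z"
      then obtain u where u: "u \<in> X" "L z = \<rho> u"
        using XY by auto
      then have "L z = L (\<gamma> u)" "\<gamma> u \<in> vecs n"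
        using X_vecs \<rho> \<gamma>_vecs by auto
      then have "z = \<gamma> u"
        using inj_onD[OF L_inj] z by simp
      then show "z \<in> \<gamma> ` X"
        using u(1) by blast
    qed
  qed
  show "derivatives_in n \<gamma> X ?Z"
    unfolding derivatives_in_def
  proof (intro ballI)
    fix u v assume u: "u \<in> X" and v: "v \<in> vecs n"
    then have uv: "u \<oplus> v \<in> vecs n"
      using X_vecs by (auto simp: vadd_in_vecs)
    then have "L (\<gamma> (u \<oplus> v) \<oplus> \<gamma> v) = \<rho> (u \<oplus> v) \<oplus> \<rho> v"
      using v \<rho> L_add \<gamma>_vecs by simp
    moreover have "\<rho> (u \<oplus> v) \<oplus> \<rho> v \<in> Y"
      using der u v by (simp add: derivatives_in_def)
    ultimately show "\<gamma> (u \<oplus> v) \<oplus> \<gamma> v \<in> ?Z"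
      using uv v \<gamma>_vecs by (simp add: vadd_in_vecs)
  qed
qed

lemma spn_round_brick_closed:
  assumes "spn_round b s \<rho>" "0 < s"
    and X: "subspace2 (b * s) X" and Y: "subspace2 (b * s) Y" and XY: "\<rho> ` X = Y"
    and der: "derivatives_in (b * s) \<rho> X Y"
    and "x \<in> X" "j < b" "block s j x \<noteq> vzero" "y \<in> vecs s"
  shows "brick_embed s j y \<in> X"
proof -
  obtain \<gamma> L \<delta> g where "\<delta> < s" and par: "parallel_with b s g \<gamma>"
    and sbox: "\<forall>j<b. diff_uniform s (g j) (2 ^ \<delta>) \<and> strongly_anti_invariant s (g j) (\<delta> - 1)"
    and L: "linear_perm (b * s) L" and \<rho>: "\<forall>x\<in>vecs (b * s). \<rho> x = L (\<gamma> x)"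
    using assms(1) by (auto simp: spn_round_def strongly_proper_def)
  have \<gamma>_vecs: "\<gamma> ` vecs (b * s) \<subseteq> vecs (b * s)"
    using parallel_in_vecs[OF par] by blast
  have "X \<subseteq> vecs (b * s)"
    using X by (simp add: subspace2_def)
  then obtain Z where "subspace2 (b * s) Z" "\<gamma> ` X = Z" "derivatives_in (b * s) \<gamma> X Z"
    by (rule derivatives_in_linear_comp[OF L \<rho> \<gamma>_vecs _ Y XY der])
  then show ?thesis
    using parallel_brick_closed[OF assms(2) \<open>\<delta> < s\<close> par sbox X] assms(7-10) by blast
qed

definition brick_support :: "nat \<Rightarrow> nat \<Rightarrow> vec set \<Rightarrow> nat set" where
  "brick_support b s X = {j. j < b \<and> (\<exists>x\<in>X. block s j x \<noteq> vzero)}"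

lemma truncate_Suc_blocks:
  "(\<lambda>k. if k < Suc m * s then w k else False) =
   (\<lambda>k. if k < m * s then w k else False) \<oplus> brick_embed s m (block s m w)"
proof
  fix k
  consider "k < m * s" | "m * s \<le> k \<and> k < m * s + s" | "m * s + s \<le> k"
    by linarith
  then show "(if k < Suc m * s then w k else False) =
    ((\<lambda>k. if k < m * s then w k else False) \<oplus> brick_embed s m (block s m w)) k"
  proof cases
    case 2
    then have "k - m * s < s" "m * s + (k - m * s) = k"
      by linarith+
    then show ?thesis
      using 2 by (auto simp: vadd_def brick_embed_def block_def)
  qed (auto simp: vadd_def brick_embed_def)
qed

text \<open>Every vector of the wall is a sum of its bricks, which all lie in X.\<close>
lemma brick_closed_subspace_eq_wall:
  assumes X: "subspace2 (b * s) X"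
    and closed: "\<And>x j y. x \<in> X \<Longrightarrow> j < b \<Longrightarrow> block s j x \<noteq> vzero \<Longrightarrow> y \<in> vecs s \<Longrightarrow>
      brick_embed s j y \<in> X"
  shows "X = wall b s (brick_support b s X)"
proof
  show "X \<subseteq> wall b s (brick_support b s X)"
    using X by (auto simp: wall_def brick_support_def subspace2_def)
next
  show "wall b s (brick_support b s X) \<subseteq> X"
  proof
    fix w assume w: "w \<in> wall b s (brick_support b s X)"
    have X0: "vzero \<in> X" and X_closed: "\<forall>u\<in>X. \<forall>v\<in>X. u \<oplus> v \<in> X"
      using X by (auto simp: subspace2_def)
    have "m \<le> b \<Longrightarrow> (\<lambda>k. if k < m * s then w k else False) \<in> X" for m
    proof (induction m)
      case 0
      then show ?case
        using X0 by (simp add: vzero_def)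
    next
      case (Suc m)
      then have m: "m < b" and IH: "(\<lambda>k. if k < m * s then w k else False) \<in> X"
        by simp_all
      have "brick_embed s m (block s m w) \<in> X"
      proof (cases "block s m w = vzero")
        case False
        then have "m \<in> brick_support b s X"
          using w m by (auto simp: wall_def)
        then obtain x where "x \<in> X" "block s m x \<noteq> vzero"
          by (auto simp: brick_support_def)
        then show ?thesis
          using closed m by simp
      qed (simp add: X0)
      then show ?case
        unfolding truncate_Suc_blocks using IH X_closed by blast
    qed
    then have "(\<lambda>k. if k < b * s then w k else False) \<in> X"
      by simp
    moreover have "(\<lambda>k. if k < b * s then w k else False) = w"
      using w by (auto simp: wall_def vecs_def fun_eq_iff)
    ultimately show "w \<in> X"
      by simp
  qed
qed

lemma wall_all_bricks: "wall b s {0..<b} = vecs (b * s)"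
  by (auto simp: wall_def)

lemma spn_round_is_wall:
  assumes "spn_round b s \<rho>" "0 < s"
    and X: "subspace2 (b * s) X" and "subspace2 (b * s) Y" "\<rho> ` X = Y"
    and "derivatives_in (b * s) \<rho> X Y"
    and nontrivial: "X \<noteq> {vzero}" and proper: "X \<noteq> vecs (b * s)"
  shows "is_wall b s X"
proof -
  have X_wall: "X = wall b s (brick_support b s X)"
    using spn_round_brick_closed[OF assms(1-6)] X by (intro brick_closed_subspace_eq_wall) blast
  obtain x where x: "x \<in> X" "x \<noteq> vzero"
    using X nontrivial by (auto simp: subspace2_def)
  moreover have "x \<in> vecs (b * s)"
    using X x(1) by (auto simp: subspace2_def)
  ultimately obtain j where "j < b" "block s j x \<noteq> vzero"
    using exists_nonzero_block[OF _ _ assms(2)] by blast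
  then have "j \<in> brick_support b s X"
    using x(1) by (auto simp: brick_support_def)
  moreover have "brick_support b s X \<noteq> {0..<b}"
  proof
    assume "brick_support b s X = {0..<b}"
    then show False
      using X_wall proper by (simp add: wall_all_bricks)
  qed
  moreover have "brick_support b s X \<subseteq> {0..<b}"
    by (auto simp: brick_support_def)
  ultimately show ?thesis
    using X_wall unfolding is_wall_def by blast
qed

lemma spn_round_not_wall_to_wall:
  assumes "spn_round b s \<rho>" "0 < s" "is_wall b s W"
  shows "\<not> is_wall b s (\<rho> ` W)"
proof -
  obtain \<gamma> L \<delta> g where par: "parallel_with b s g \<gamma>"
    and sai: "\<forall>j<b. strongly_anti_invariant s (g j) (\<delta> - 1)"
    and sp: "strongly_proper b s L" and \<rho>: "\<forall>x\<in>vecs (b * s). \<rho> x = L (\<gamma> x)"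
    using assms(1) unfolding spn_round_def by blast
  obtain I where W: "W = wall b s I"
    using assms(3) by (auto simp: is_wall_def)
  have "\<gamma> ` W = W"
    using parallel_image_wall[OF par assms(2)] sai W by (simp add: strongly_anti_invariant_def)
  moreover have "W \<subseteq> vecs (b * s)"
    using W by (auto simp: wall_def)
  ultimately have "\<rho> ` W = L ` \<gamma> ` W"
    unfolding image_comp using \<rho> by (intro image_cong) auto
  then have "\<rho> ` W = L ` W"
    using \<open>\<gamma> ` W = W\<close> by simp
  then show ?thesis
    using sp assms(3) by (auto simp: strongly_proper_def)
qed

lemma derivatives_in_image_subset:
  assumes "derivatives_in n f X Y" "f vzero = vzero"
  shows "f ` X \<subseteq> Y"
proof
  fix y assume "y \<in> f ` X"
  then obtain x where "x \<in> X" "y = f x"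
    by blast
  then show "y \<in> Y"
    using assms bspec[OF bspec[OF assms(1)[unfolded derivatives_in_def]] vzero_in_vecs] by simp
qed

text \<open>The two subspaces are images of each other under permutations fixing zero; if they were
  proper and non-trivial, both would be walls, and the first round would map a wall to a wall.\<close>
lemma derivatives_in_pair_trivial:
  assumes R1: "spn_round b s \<rho>1" and R2: "spn_round b s \<rho>2" and "0 < s"
    and D: "subspace2 (b * s) D" and B: "subspace2 (b * s) B"
    and DB: "derivatives_in (b * s) \<rho>1 D B" and BD: "derivatives_in (b * s) \<rho>2 B D"
  shows "(D = {vzero} \<and> B = {vzero}) \<or> (D = vecs (b * s) \<and> B = vecs (b * s))"
proof -
  let ?V = "vecs (b * s)"
  have D_vecs: "D \<subseteq> ?V" and B_vecs: "B \<subseteq> ?V"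
    using D B by (simp_all add: subspace2_def)
  have bij1: "bij_betw \<rho>1 ?V ?V" and "\<rho>1 vzero = vzero"
    and bij2: "bij_betw \<rho>2 ?V ?V" and "\<rho>2 vzero = vzero"
    using R1 R2 by (simp_all add: spn_round_def)
  then have sub1: "\<rho>1 ` D \<subseteq> B" and sub2: "\<rho>2 ` B \<subseteq> D"
    using DB BD by (simp_all add: derivatives_in_image_subset)
  have inj1: "inj_on \<rho>1 D" and inj2: "inj_on \<rho>2 B"
    using bij1 bij2 D_vecs B_vecs by (auto simp: bij_betw_def intro: inj_on_subset)
  have fin: "finite D" "finite B"
    using D B by (simp_all add: subspace2_finite)
  have "card D = card B"
    using card_inj_on_le[OF inj1 sub1] card_inj_on_le[OF inj2 sub2] fin by simp
  then have DB_eq: "\<rho>1 ` D = B" and BD_eq: "\<rho>2 ` B = D"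
    using card_subset_eq[OF fin(2) sub1] card_subset_eq[OF fin(1) sub2] card_image[OF inj1]
      card_image[OF inj2] by simp_all
  have trivial: "D = {vzero} \<longleftrightarrow> B = {vzero}"
    using DB_eq BD_eq \<open>\<rho>1 vzero = vzero\<close> \<open>\<rho>2 vzero = vzero\<close> by auto
  have full: "D = ?V \<longleftrightarrow> B = ?V"
    using DB_eq BD_eq bij1 bij2 by (auto simp: bij_betw_def)
  show ?thesis
  proof (rule ccontr)
    assume "\<not> ?thesis"
    then have "D \<noteq> {vzero}" "D \<noteq> ?V" "B \<noteq> {vzero}" "B \<noteq> ?V"
      using trivial full by blast+
    then have "is_wall b s D" "is_wall b s B"
      using spn_round_is_wall[OF R1 \<open>0 < s\<close> D B DB_eq DB]
        spn_round_is_wall[OF R2 \<open>0 < s\<close> B D BD_eq BD] by simp_all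
    then show False
      using spn_round_not_wall_to_wall[OF R1 \<open>0 < s\<close>] DB_eq by blast
  qed
qed

lemma spn_round_two_le:
  assumes "spn_round b s \<rho>" "0 < b"
  shows "2 \<le> s"
proof -
  obtain \<delta> g where "\<forall>j<b. strongly_anti_invariant s (g j) (\<delta> - 1)"
    using assms(1) unfolding spn_round_def by blast
  then have "strongly_anti_invariant s (g 0) (\<delta> - 1)"
    using assms(2) by blast
  then show ?thesis
    by (simp add: strongly_anti_invariant_def)
qed

section \<open>Feistel steps\<close>

lemma feistel_Pair [simp]: "feistel \<rho> (x, y) = (y, x \<oplus> \<rho> y)"
  by (simp add: feistel_def)

lemma padd_Pair [simp]: "padd (a, b) (c, d) = (a \<oplus> c, b \<oplus> d)"
  by (simp add: padd_def)

definition Bset :: "nat \<Rightarrow> (vec \<times> vec) set \<Rightarrow> vec set" where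
  "Bset n U = {b \<in> vecs n. (b, vzero) \<in> U}"

lemma subspace2_Dset: "subgroup2 n U \<Longrightarrow> subspace2 n (Dset n U)"
  by (fastforce simp: subgroup2_def subspace2_def Dset_def vadd_in_vecs)

lemma subspace2_Bset: "subgroup2 n U \<Longrightarrow> subspace2 n (Bset n U)"
  by (fastforce simp: subgroup2_def subspace2_def Bset_def vadd_in_vecs)

definition feistel_step :: "nat \<Rightarrow> (vec \<Rightarrow> vec) \<Rightarrow> (vec \<times> vec) set \<Rightarrow> (vec \<times> vec) set \<Rightarrow> bool" where
  "feistel_step n \<rho> U U' \<longleftrightarrow> feistel \<rho> ` U = U' \<and>
     (\<forall>u\<in>U. \<forall>v\<in>vecs n \<times> vecs n. padd (feistel \<rho> (padd u v)) (feistel \<rho> v) \<in> U')"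

text \<open>The Feistel operator maps the coset U + v onto a coset of U'; since it fixes zero, the coset
  U itself goes onto U'.\<close>
lemma feistel_step_of_part_image:
  assumes U: "subgroup2 n U" and U': "subgroup2 n U'" and "\<rho> vzero = vzero"
    and "part_image (linpart n U) (feistel \<rho>) = linpart n U'"
  shows "feistel_step n \<rho> U U'"
proof -
  let ?F = "feistel \<rho>" and ?V2 = "vecs n \<times> vecs n"
  have U0: "(vzero, vzero) \<in> U" and U'_closed: "\<forall>u\<in>U'. \<forall>v\<in>U'. padd u v \<in> U'"
    using U U' by (simp_all add: subgroup2_def)
  have coset: "\<exists>w. ?F ` (\<lambda>u. padd u v) ` U = (\<lambda>u. padd u w) ` U'" if "v \<in> ?V2" for v
  proof -
    have "?F ` (\<lambda>u. padd u v) ` U \<in> part_image (linpart n U) ?F"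
      using that by (auto simp: part_image_def linpart_def)
    then show ?thesis
      using assms(4) by (auto simp: linpart_def)
  qed
  have padd_zero: "padd u (vzero, vzero) = u" "padd (vzero, vzero) u = u" for u
    by (cases u; simp)+
  have "?F ` U = U'"
  proof -
    have "(vzero, vzero) \<in> ?V2"
      by simp
    then obtain w where "?F ` (\<lambda>u. padd u (vzero, vzero)) ` U = (\<lambda>u. padd u w) ` U'"
      using coset by blast
    then have w: "?F ` U = (\<lambda>u. padd u w) ` U'"
      by (simp add: padd_zero)
    have "?F (vzero, vzero) \<in> ?F ` U"
      using U0 by (rule imageI)
    then have "(vzero, vzero) \<in> (\<lambda>u. padd u w) ` U'"
      using w assms(3) by simp
    then obtain u0 where "u0 \<in> U'" "padd u0 w = (vzero, vzero)"
      by auto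
    moreover from this(2) have "u0 = w"
      by (cases u0; cases w) (simp add: vadd_eq_vzero_iff)
    ultimately have "w \<in> U'"
      by simp
    have "u \<in> (\<lambda>u. padd u w) ` U'" if "u \<in> U'" for u
    proof -
      have "padd (padd u w) w \<in> (\<lambda>u. padd u w) ` U'"
        using U'_closed \<open>w \<in> U'\<close> that by blast
      moreover have "padd (padd u w) w = u"
        by (cases u; cases w) simp
      ultimately show ?thesis
        by simp
    qed
    then have "(\<lambda>u. padd u w) ` U' = U'"
      using U'_closed \<open>w \<in> U'\<close> by blast
    then show ?thesis
      using w by simp
  qed
  moreover have "padd (?F (padd u v)) (?F v) \<in> U'" if u: "u \<in> U" and v: "v \<in> ?V2" for u v
  proof -
    obtain w where w: "?F ` (\<lambda>u. padd u v) ` U = (\<lambda>u. padd u w) ` U'"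
      using coset[OF v] by blast
    have "padd (vzero, vzero) v \<in> (\<lambda>u. padd u v) ` U"
      using U0 by (rule imageI)
    then have "?F v \<in> (\<lambda>u. padd u w) ` U'"
      unfolding w[symmetric] padd_zero by (rule imageI)
    then obtain u1 where "u1 \<in> U'" "?F v = padd u1 w"
      by blast
    have "?F (padd u v) \<in> (\<lambda>u. padd u w) ` U'"
      unfolding w[symmetric] using u by (intro imageI)
    then obtain u2 where "u2 \<in> U'" "?F (padd u v) = padd u2 w"
      by blast
    moreover have "padd (padd u2 w) (padd u1 w) = padd u2 u1"
      by (cases u1; cases u2; cases w) (auto simp: vadd_def fun_eq_iff)
    ultimately show ?thesis
      using U'_closed \<open>u1 \<in> U'\<close> \<open>?F v = padd u1 w\<close> by simp
  qed
  ultimately show ?thesis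
    by (simp add: feistel_step_def)
qed

lemma feistel_step_mem:
  "feistel_step n \<rho> U U' \<Longrightarrow> (x, y) \<in> U \<Longrightarrow> (y, x \<oplus> \<rho> y) \<in> U'"
  unfolding feistel_step_def by (metis feistel_Pair imageI)

lemma feistel_step_vzero_fst_iff:
  assumes "feistel_step n \<rho> U U'" "\<rho> vzero = vzero"
  shows "(vzero, y) \<in> U' \<longleftrightarrow> (y, vzero) \<in> U"
proof
  assume "(vzero, y) \<in> U'"
  then obtain a c where "(a, c) \<in> U" "(vzero, y) = feistel \<rho> (a, c)"
    using assms(1) unfolding feistel_step_def by auto
  then show "(y, vzero) \<in> U"
    using assms(2) by simp
next
  assume "(y, vzero) \<in> U"
  then show "(vzero, y) \<in> U'"
    using feistel_step_mem[OF assms(1)] assms(2) by fastforce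
qed

lemma feistel_step_vzero_snd:
  assumes "feistel_step n \<rho> U U'" "(y, vzero) \<in> U'"
  obtains x where "(x, y) \<in> U"
proof -
  obtain a c where "(a, c) \<in> U" "(y, vzero) = feistel \<rho> (a, c)"
    using assms unfolding feistel_step_def by auto
  then show ?thesis
    using that by simp
qed

lemma feistel_step_Dset:
  "feistel_step n \<rho> U U' \<Longrightarrow> \<rho> vzero = vzero \<Longrightarrow> Dset n U' = Bset n U"
  by (auto simp: Dset_def Bset_def feistel_step_vzero_fst_iff)

text \<open>Adding the images of (x, c) + (0, v), (0, v) and (x, c) under the Feistel operator gives
  (0, \<rho>(c + v) + \<rho> v + \<rho> c).\<close>
lemma feistel_step_derivative:
  assumes step: "feistel_step n \<rho> U U'" and U': "subgroup2 n U'" and "\<rho> vzero = vzero"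
    and "(x, c) \<in> U" "v \<in> vecs n"
  shows "(\<rho> (c \<oplus> v) \<oplus> \<rho> v \<oplus> \<rho> c, vzero) \<in> U"
proof -
  have "(vzero, v) \<in> vecs n \<times> vecs n"
    using assms(5) by simp
  then have "padd (feistel \<rho> (padd (x, c) (vzero, v))) (feistel \<rho> (vzero, v)) \<in> U'"
    using step assms(4) unfolding feistel_step_def by blast
  then have "(c, x \<oplus> \<rho> (c \<oplus> v) \<oplus> \<rho> v) \<in> U'"
    by simp
  moreover have "(c, x \<oplus> \<rho> c) \<in> U'"
    using feistel_step_mem[OF step assms(4)] .
  ultimately have "padd (c, x \<oplus> \<rho> (c \<oplus> v) \<oplus> \<rho> v) (c, x \<oplus> \<rho> c) \<in> U'"
    using U' unfolding subgroup2_def by blast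
  moreover have "padd (c, x \<oplus> \<rho> (c \<oplus> v) \<oplus> \<rho> v) (c, x \<oplus> \<rho> c)
      = (vzero, \<rho> (c \<oplus> v) \<oplus> \<rho> v \<oplus> \<rho> c)"
    by (auto simp: vadd_def vzero_def fun_eq_iff)
  ultimately show ?thesis
    using feistel_step_vzero_fst_iff[OF step assms(3)] by simp
qed

lemma feistel_step_derivative_Bset:
  assumes step: "feistel_step n \<rho> U U'" and U: "subgroup2 n U" and U': "subgroup2 n U'"
    and "\<rho> vzero = vzero" and "(x, c) \<in> U" "(\<rho> c, vzero) \<in> U" "v \<in> vecs n"
  shows "\<rho> (c \<oplus> v) \<oplus> \<rho> v \<in> Bset n U"
proof -
  have "padd (\<rho> (c \<oplus> v) \<oplus> \<rho> v \<oplus> \<rho> c, vzero) (\<rho> c, vzero) \<in> U"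
    using feistel_step_derivative[OF step U' assms(4,5,7)] assms(6) U unfolding subgroup2_def by blast
  then have "(\<rho> (c \<oplus> v) \<oplus> \<rho> v, vzero) \<in> U"
    by simp
  moreover from this have "\<rho> (c \<oplus> v) \<oplus> \<rho> v \<in> vecs n"
    using U by (auto simp: subgroup2_def)
  ultimately show ?thesis
    by (simp add: Bset_def)
qed

text \<open>If Bset U were trivial, the derivative of \<rho> in the direction of some nonzero c would be
  constant, so the subspace {0, c} would contain a whole brick.\<close>
lemma feistel_step_Bset_nontrivial:
  assumes R: "spn_round b s \<rho>" "0 < s" and step: "feistel_step (b * s) \<rho> U U'"
    and U: "subgroup2 (b * s) U" and U': "subgroup2 (b * s) U'" and "U \<noteq> {(vzero, vzero)}"
  shows "Bset (b * s) U \<noteq> {vzero}"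
proof
  assume B0: "Bset (b * s) U = {vzero}"
  let ?V = "vecs (b * s)"
  have \<rho>0: "\<rho> vzero = vzero" and bij: "bij_betw \<rho> ?V ?V"
    using R by (simp_all add: spn_round_def)
  have U_vecs: "U \<subseteq> ?V \<times> ?V" and "(vzero, vzero) \<in> U"
    using U by (simp_all add: subgroup2_def)
  then obtain x c where xc: "(x, c) \<in> U" "(x, c) \<noteq> (vzero, vzero)"
    using assms(6) by auto
  have c: "c \<in> ?V"
    using xc(1) U_vecs by auto
  have "c \<noteq> vzero"
  proof
    assume "c = vzero"
    then have "x \<in> Bset (b * s) U"
      using xc(1) U_vecs by (auto simp: Bset_def)
    then show False
      using B0 xc(2) \<open>c = vzero\<close> by simp
  qed
  have const: "\<rho> (c \<oplus> v) \<oplus> \<rho> v = \<rho> c" if "v \<in> ?V" for v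
  proof -
    have "(\<rho> (c \<oplus> v) \<oplus> \<rho> v \<oplus> \<rho> c, vzero) \<in> U"
      by (rule feistel_step_derivative[OF step U' \<rho>0 xc(1) that])
    then have "\<rho> (c \<oplus> v) \<oplus> \<rho> v \<oplus> \<rho> c \<in> Bset (b * s) U"
      using U_vecs by (auto simp: Bset_def)
    then show ?thesis
      using B0 by (simp add: vadd_eq_vzero_iff)
  qed
  define X where "X = {vzero, c}"
  have X: "subspace2 (b * s) X" and Y: "subspace2 (b * s) {vzero, \<rho> c}"
    using c bij_betwE[OF bij] by (auto simp: X_def subspace2_def)
  have "\<rho> ` X = {vzero, \<rho> c}"
    using \<rho>0 by (simp add: X_def)
  moreover have "derivatives_in (b * s) \<rho> X {vzero, \<rho> c}"
    using const by (auto simp: derivatives_in_def X_def)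
  moreover obtain j where j: "j < b" "block s j c \<noteq> vzero"
    using exists_nonzero_block[OF c \<open>c \<noteq> vzero\<close> R(2)] .
  ultimately have "brick_embed s j ` vecs s \<subseteq> X"
    using spn_round_brick_closed[OF R X Y] by (auto simp: X_def)
  then have "card (brick_embed s j ` vecs s) \<le> card X"
    by (rule card_mono[rotated]) (simp add: X_def)
  also have "\<dots> \<le> 2"
    by (simp add: X_def card_insert_if)
  finally have "(2::nat) ^ s \<le> 2"
    by (simp add: card_image[OF inj_on_brick_embed] card_vecs)
  moreover have "(2::nat) ^ 2 \<le> 2 ^ s"
    using spn_round_two_le[OF R(1)] j(1) by (intro power_increasing) auto
  ultimately show False
    by simp
qed

lemma feistel_step_Aset_nontrivial:
  assumes step: "feistel_step n \<rho> U U'" and U: "subgroup2 n U" and U': "subgroup2 n U'"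
    and "U \<noteq> {(vzero, vzero)}" and A0: "Aset n U = {vzero}"
  shows "Aset n U' \<noteq> {vzero}"
proof
  assume A'0: "Aset n U' = {vzero}"
  have U_vecs: "U \<subseteq> vecs n \<times> vecs n" and U'_vecs: "U' \<subseteq> vecs n \<times> vecs n"
    and "(vzero, vzero) \<in> U"
    using U U' by (simp_all add: subgroup2_def)
  then obtain x c where xc: "(x, c) \<in> U" "(x, c) \<noteq> (vzero, vzero)"
    using assms(4) by auto
  have "(c, x \<oplus> \<rho> c) \<in> U'"
    using feistel_step_mem[OF step xc(1)] .
  then have "x \<in> Aset n U" "c \<in> Aset n U'"
    using xc(1) U_vecs U'_vecs by (auto simp: Aset_def)
  then show False
    using A0 A'0 xc(2) by simp
qed

lemma feistel_step_derivatives_in_absurd: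
  assumes R1: "spn_round b s \<rho>1" and R2: "spn_round b s \<rho>2" and "0 < s"
    and step: "feistel_step (b * s) \<rho>1 U U'"
    and U: "subgroup2 (b * s) U" and U': "subgroup2 (b * s) U'"
    and "U \<noteq> {(vzero, vzero)}" and proper: "U \<noteq> vecs (b * s) \<times> vecs (b * s)"
    and "derivatives_in (b * s) \<rho>1 (Dset (b * s) U) (Bset (b * s) U)"
    and "derivatives_in (b * s) \<rho>2 (Bset (b * s) U) (Dset (b * s) U)"
  shows False
proof -
  let ?V = "vecs (b * s)"
  consider "Bset (b * s) U = {vzero}" | "Dset (b * s) U = ?V" "Bset (b * s) U = ?V"
    using derivatives_in_pair_trivial[OF R1 R2 \<open>0 < s\<close> subspace2_Dset[OF U] subspace2_Bset[OF U]
        assms(9,10)] by blast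
  then show False
  proof cases
    case 1
    then show False
      using feistel_step_Bset_nontrivial[OF R1 \<open>0 < s\<close> step U U' assms(7)] by blast
  next
    case 2
    have "(x, y) \<in> U" if "x \<in> ?V" "y \<in> ?V" for x y
    proof -
      have "(x, vzero) \<in> U" "(vzero, y) \<in> U"
        using 2 that by (auto simp: Bset_def Dset_def)
      then have "padd (x, vzero) (vzero, y) \<in> U"
        using U unfolding subgroup2_def by blast
      then show ?thesis
        by simp
    qed
    then show False
      using U proper by (auto simp: subgroup2_def)
  qed
qed

lemma feistel_step_back_derivatives_in:
  assumes step1: "feistel_step n \<rho>1 U U'" and step2: "feistel_step n \<rho>2 U' U"
    and U: "subgroup2 n U" and U': "subgroup2 n U'"
    and \<rho>1: "\<rho>1 vzero = vzero" and \<rho>2: "\<rho>2 vzero = vzero"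
  shows "derivatives_in n \<rho>1 (Dset n U) (Bset n U)"
    and "derivatives_in n \<rho>2 (Bset n U) (Dset n U)"
proof -
  note iff1 = feistel_step_vzero_fst_iff[OF step1 \<rho>1]
    and iff2 = feistel_step_vzero_fst_iff[OF step2 \<rho>2]
  have U_closed: "\<forall>u\<in>U. \<forall>v\<in>U. padd u v \<in> U" and U'_closed: "\<forall>u\<in>U'. \<forall>v\<in>U'. padd u v \<in> U'"
    using U U' by (simp_all add: subgroup2_def)
  show "derivatives_in n \<rho>1 (Dset n U) (Bset n U)"
    unfolding derivatives_in_def
  proof (intro ballI)
    fix d v assume "d \<in> Dset n U" "v \<in> vecs n"
    then have d: "(vzero, d) \<in> U"
      by (simp add: Dset_def)
    then have "padd (d, vzero \<oplus> \<rho>1 d) (d, vzero) \<in> U'"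
      using feistel_step_mem[OF step1 d] iff2 U'_closed by blast
    then have "(\<rho>1 d, vzero) \<in> U"
      using iff1 by simp
    then show "\<rho>1 (d \<oplus> v) \<oplus> \<rho>1 v \<in> Bset n U"
      using feistel_step_derivative_Bset[OF step1 U U' \<rho>1 d _ \<open>v \<in> vecs n\<close>] by blast
  qed
  show "derivatives_in n \<rho>2 (Bset n U) (Dset n U)"
    unfolding derivatives_in_def
  proof (intro ballI)
    fix c v assume "c \<in> Bset n U" "v \<in> vecs n"
    then have "(c, vzero) \<in> U"
      by (simp add: Bset_def)
    then have c: "(vzero, c) \<in> U'"
      using iff1 by simp
    then have "padd (c, vzero \<oplus> \<rho>2 c) (c, vzero) \<in> U"
      using feistel_step_mem[OF step2 c] \<open>(c, vzero) \<in> U\<close> U_closed by blast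
    then have "(\<rho>2 c, vzero) \<in> U'"
      using iff2 by simp
    then show "\<rho>2 (c \<oplus> v) \<oplus> \<rho>2 v \<in> Dset n U"
      using feistel_step_derivative_Bset[OF step2 U' U \<rho>2 c _ \<open>v \<in> vecs n\<close>]
        feistel_step_Dset[OF step2 \<rho>2] by blast
  qed
qed

lemma product_subgroup_vzero_fst:
  "U = Aset n U \<times> Dset n U \<Longrightarrow> (x, y) \<in> U \<Longrightarrow> (vzero, y) \<in> U"
  unfolding Dset_def by blast

lemma feistel_product_steps_derivatives_in:
  assumes step1: "feistel_step n \<rho>1 U U'" and step2: "feistel_step n \<rho>2 U' U''"
    and U: "subgroup2 n U" and U': "subgroup2 n U'" and U'': "subgroup2 n U''"
    and \<rho>1: "\<rho>1 vzero = vzero" and \<rho>2: "\<rho>2 vzero = vzero"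
    and prod: "U = Aset n U \<times> Dset n U" "U' = Aset n U' \<times> Dset n U'"
      "U'' = Aset n U'' \<times> Dset n U''"
  shows "derivatives_in n \<rho>1 (Dset n U) (Bset n U)"
    and "derivatives_in n \<rho>2 (Bset n U) (Dset n U)"
proof -
  note iff1 = feistel_step_vzero_fst_iff[OF step1 \<rho>1]
    and iff2 = feistel_step_vzero_fst_iff[OF step2 \<rho>2]
  show "derivatives_in n \<rho>1 (Dset n U) (Bset n U)"
    unfolding derivatives_in_def
  proof (intro ballI)
    fix d v assume "d \<in> Dset n U" "v \<in> vecs n"
    then have d: "(vzero, d) \<in> U"
      by (simp add: Dset_def)
    have "(vzero, vzero \<oplus> \<rho>1 d) \<in> U'"
      using product_subgroup_vzero_fst[OF prod(2) feistel_step_mem[OF step1 d]] .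
    then have "(\<rho>1 d, vzero) \<in> U"
      using iff1 by simp
    then show "\<rho>1 (d \<oplus> v) \<oplus> \<rho>1 v \<in> Bset n U"
      using feistel_step_derivative_Bset[OF step1 U U' \<rho>1 d _ \<open>v \<in> vecs n\<close>] by blast
  qed
  show "derivatives_in n \<rho>2 (Bset n U) (Dset n U)"
    unfolding derivatives_in_def
  proof (intro ballI)
    fix c v assume "c \<in> Bset n U" "v \<in> vecs n"
    then have c: "(vzero, c) \<in> U'"
      using iff1 by (simp add: Bset_def)
    have "(vzero, vzero \<oplus> \<rho>2 c) \<in> U''"
      using product_subgroup_vzero_fst[OF prod(3) feistel_step_mem[OF step2 c]] .
    then have "(\<rho>2 c, vzero) \<in> U'"
      using iff2 by simp
    then have "\<rho>2 (c \<oplus> v) \<oplus> \<rho>2 v \<in> Bset n U'"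
      using feistel_step_derivative_Bset[OF step2 U' U'' \<rho>2 c _ \<open>v \<in> vecs n\<close>] by blast
    then have "(\<rho>2 (c \<oplus> v) \<oplus> \<rho>2 v, vzero) \<in> U'"
      by (simp add: Bset_def)
    then obtain x where "(x, \<rho>2 (c \<oplus> v) \<oplus> \<rho>2 v) \<in> U"
      by (rule feistel_step_vzero_snd[OF step1])
    then have "(vzero, \<rho>2 (c \<oplus> v) \<oplus> \<rho>2 v) \<in> U"
      by (rule product_subgroup_vzero_fst[OF prod(1)])
    then show "\<rho>2 (c \<oplus> v) \<oplus> \<rho>2 v \<in> Dset n U"
      using U by (auto simp: Dset_def subgroup2_def)
  qed
qed

lemma spn_round_vzero: "spn_round b s \<rho> \<Longrightarrow> \<rho> vzero = vzero"
  by (simp add: spn_round_def)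

lemma feistel_step_back_absurd:
  assumes R1: "spn_round b s \<rho>1" and R2: "spn_round b s \<rho>2" and "0 < s"
    and step1: "feistel_step (b * s) \<rho>1 U U'" and step2: "feistel_step (b * s) \<rho>2 U' U"
    and U: "subgroup2 (b * s) U" and U': "subgroup2 (b * s) U'"
    and "U \<noteq> {(vzero, vzero)}" "U \<noteq> vecs (b * s) \<times> vecs (b * s)"
  shows False
  using feistel_step_back_derivatives_in[OF step1 step2 U U' spn_round_vzero[OF R1]
      spn_round_vzero[OF R2]]
  by (rule feistel_step_derivatives_in_absurd[OF R1 R2 \<open>0 < s\<close> step1 U U' assms(8,9)])

lemma feistel_product_steps_absurd:
  assumes R1: "spn_round b s \<rho>1" and R2: "spn_round b s \<rho>2" and "0 < s"
    and step1: "feistel_step (b * s) \<rho>1 U U'" and step2: "feistel_step (b * s) \<rho>2 U' U''"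
    and U: "subgroup2 (b * s) U" and U': "subgroup2 (b * s) U'" and U'': "subgroup2 (b * s) U''"
    and "U \<noteq> {(vzero, vzero)}" "U \<noteq> vecs (b * s) \<times> vecs (b * s)"
    and "U = Aset (b * s) U \<times> Dset (b * s) U" "U' = Aset (b * s) U' \<times> Dset (b * s) U'"
      "U'' = Aset (b * s) U'' \<times> Dset (b * s) U''"
  shows False
  using feistel_product_steps_derivatives_in[OF step1 step2 U U' U'' spn_round_vzero[OF R1]
      spn_round_vzero[OF R2] assms(11-13)]
  by (rule feistel_step_derivatives_in_absurd[OF R1 R2 \<open>0 < s\<close> step1 U U' assms(9,10)])

theorem theorem4p10:
  fixes b s r :: nat
    and \<rho> \<gamma> L :: "nat \<Rightarrow> vec \<Rightarrow> vec"
    and U :: "nat \<Rightarrow> (vec \<times> vec) set"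
  assumes "0 < b" and "0 < s" and "2 \<le> r"
    and rho_perm: "\<forall>i\<in>{1..r}. bij_betw (\<rho> i) (vecs (b * s)) (vecs (b * s))"
    and rho_zero: "\<forall>i\<in>{1..r}. \<rho> i vzero = vzero"
    and rho_comp: "\<forall>i\<in>{1..r}. \<forall>x\<in>vecs (b * s). \<rho> i x = L i (\<gamma> i x)"
    and gamma_par: "\<forall>i\<in>{1..r}. \<exists>\<delta> g. \<delta> < s \<and> parallel_with b s g (\<gamma> i) \<and>
        (\<forall>j<b. diff_uniform s (g j) (2 ^ \<delta>) \<and> strongly_anti_invariant s (g j) (\<delta> - 1))"
    and lambda_sp: "\<forall>i\<in>{1..r}. strongly_proper b s (L i)"
    and U_sub: "\<forall>i\<in>{1..r+1}. proper_nontrivial_subgroup2 (b * s) (U i)"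
    and U_nt: "\<forall>i\<in>{1..r+1}. nontrivial_partition (b * s) (linpart (b * s) (U i))"
    and U_trail: "\<forall>i\<in>{1..r}. part_image (linpart (b * s) (U i)) (feistel (\<rho> i))
                              = linpart (b * s) (U (i + 1))"
  shows "\<not> ((\<exists>i\<in>{1..r-1}. part_image (linpart (b * s) (U (i + 1))) (feistel (\<rho> (i + 1)))
                              = linpart (b * s) (U i))
          \<or> (\<exists>i\<in>{1..r-1}. \<forall>k\<in>{i, i + 1, i + 2}.
                U k = Aset (b * s) (U k) \<times> Dset (b * s) (U k))
          \<or> (\<exists>i\<in>{1..r}. Dset (b * s) (U i) = {vzero} \<and> Dset (b * s) (U (i + 1)) = {vzero})
          \<or> (\<exists>i\<in>{1..r}. Aset (b * s) (U i) = {vzero} \<and> Aset (b * s) (U (i + 1)) = {vzero}))"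
proof -
  let ?n = "b * s"
  have R: "spn_round b s (\<rho> i)" if "i \<in> {1..r}" for i
    using that rho_perm rho_zero rho_comp gamma_par lambda_sp unfolding spn_round_def by blast
  have U: "subgroup2 ?n (U i)" "U i \<noteq> {(vzero, vzero)}" "U i \<noteq> vecs ?n \<times> vecs ?n"
    if "i \<in> {1..r+1}" for i
    using that U_sub by (auto simp: proper_nontrivial_subgroup2_def)
  have step: "feistel_step ?n (\<rho> i) (U i) (U (i + 1))" if "i \<in> {1..r}" for i
    using that U_trail U(1) rho_zero by (intro feistel_step_of_part_image) auto
  show ?thesis
  proof (intro notI, elim disjE bexE conjE)
    fix i assume "i \<in> {1..r-1}"
      and reverse: "part_image (linpart ?n (U (i + 1))) (feistel (\<rho> (i + 1))) = linpart ?n (U i)"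
    then have i: "i \<in> {1..r}" "i + 1 \<in> {1..r}" "i \<in> {1..r+1}" "i + 1 \<in> {1..r+1}"
      by auto
    have "feistel_step ?n (\<rho> (i + 1)) (U (i + 1)) (U i)"
      using reverse U(1)[OF i(4)] U(1)[OF i(3)] rho_zero i(2) by (intro feistel_step_of_part_image) auto
    then show False
      using feistel_step_back_absurd[OF R[OF i(1)] R[OF i(2)] \<open>0 < s\<close> step[OF i(1)]]
        U[OF i(3)] U(1)[OF i(4)] by blast
  next
    fix i assume "i \<in> {1..r-1}" and prod: "\<forall>k\<in>{i, i + 1, i + 2}. U k = Aset ?n (U k) \<times> Dset ?n (U k)"
    then have i: "i \<in> {1..r}" "i + 1 \<in> {1..r}" "i \<in> {1..r+1}" "i + 1 \<in> {1..r+1}"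
        "i + 1 + 1 \<in> {1..r+1}"
      by auto
    show False
      using feistel_product_steps_absurd[OF R[OF i(1)] R[OF i(2)] \<open>0 < s\<close> step[OF i(1)]
          step[OF i(2)] U(1)[OF i(3)] U(1)[OF i(4)] U(1)[OF i(5)] U(2,3)[OF i(3)]] prod
      by (simp add: add.assoc)
  next
    fix i assume i: "i \<in> {1..r}" and "Dset ?n (U (i + 1)) = {vzero}"
    then show False
      using feistel_step_Bset_nontrivial[OF R[OF i] \<open>0 < s\<close> step[OF i] U(1,1,2)] i
        feistel_step_Dset[OF step[OF i] spn_round_vzero[OF R[OF i]]] by simp
  next
    fix i assume i: "i \<in> {1..r}" and "Aset ?n (U i) = {vzero}" "Aset ?n (U (i + 1)) = {vzero}"
    then show False
      using feistel_step_Aset_nontrivial[OF step[OF i] U(1,1,2)] i by simp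
  qed
qed

end
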